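(* Let $P$ be a program and let $\tau = \alpha \cdot \mathit{issue}(p,t)\cdot \beta\cdot \mathit{com}(p,t)$ be a minimal anomaly of $P$ such that $\mathit{issue}(p,t)$ happens before $\mathit{com}(p,t)$ through $\beta$. Then no event $a$ in $\beta$ writes to a shared variable that $\mathit{com}(p,t)$ writes to.
   Context: Programs: parallel compositions of processes, each a sequence of transactions (reads of shared variables into registers, writes of register expressions to shared variables, assume statements, delimited by begin and commit). Snapshot isolation (SI): a transaction reads/writes a local snapshot of the central memory taken at its begin and can commit (publishing its writes) only if no transaction committed after its begin wrote a variable it writes. Serializability: every transaction executes atomically. Traces: each transaction $t$ of process $p$ yields an issue event $\mathit{issue}(p,t)$ (begin, reads, local writes) and a commit event $\mathit{com}(p,t)$ (which performs the writes of $t$ on the central memory). Dependencies: $\mathsf{po}$ (program order), $\mathsf{rf}$ (write-read), $\mathsf{st}$ (store order between writes to the same variable), $\mathsf{cf}$ (conflict: a read does not see a write to the same variable that would affect it if visible), and issue-to-commit of the same transaction; $\mathsf{hb}^1$ is their union, $\mathsf{hb}$ its transitive closure. An anomaly of $P$ is a trace of an SI execution of $P$ that is not a trace of any serializable execution. "$a$ happens before $b$ through $\beta$" in a trace $\alpha\cdot a\cdot\beta\cdot b\cdot\gamma$ means there is a nonempty subsequence $c_1\cdots c_n$ of $\beta$ with $c_i\to_{\mathsf{hb}^1}c_{i+1}$ for all $i\in[0,n]$, $c_0=a$, $c_{n+1}=b$. A transaction is delayed in a trace if its issue happens before its commit through the events between them; an anomaly is minimal if it has the least number of delayed transactions among all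 anomalies of $P$. *)

theory Defs
  imports Main "HOL-Library.Sublist"
begin

datatype ('v, 'r, 'd) instr =
    Read 'r 'v
  | Write 'v "('r \<Rightarrow> 'd) \<Rightarrow> 'd"
  | Assume "('r \<Rightarrow> 'd) \<Rightarrow> bool"

text \<open>A program: each process is a sequence of transactions (each transaction a
list of instructions, implicitly delimited by begin/commit); plus initial values of
shared variables and registers.\<close>

record ('p, 'v, 'r, 'd) prog =
  code     :: "'p \<Rightarrow> ('v, 'r, 'd) instr list list"
  init_mem :: "'v \<Rightarrow> 'd"
  init_reg :: "'p \<Rightarrow> 'r \<Rightarrow> 'd"

definition wf_prog :: "('p, 'v, 'r, 'd) prog \<Rightarrow> bool" where
  "wf_prog P \<longleftrightarrow> finite {p. code P p \<noteq> []}"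

text \<open>A transaction is identified by its process and its index in that process.
The source of a read is the transaction whose committed write it sees
(None = initial value). An issue event records, for every variable read from the
snapshot (i.e. not after a local write to it), its source. A commit event records
the set of shared variables it writes.\<close>

type_synonym 'p tid = "'p \<times> nat"
type_synonym 'p src = "'p tid option"

datatype ('p, 'v) event =
    Iss 'p nat "'v \<Rightarrow> 'p src option"
  | Com 'p nat "'v set"

fun tid :: "('p, 'v) event \<Rightarrow> 'p tid" where
  "tid (Iss p i _) = (p, i)"
| "tid (Com p i _) = (p, i)"

fun is_iss :: "('p, 'v) event \<Rightarrow> bool" where
  "is_iss (Iss _ _ _) = True"
| "is_iss (Com _ _ _) = False"

fun is_com :: "('p, 'v) event \<Rightarrow> bool" where
  "is_com (Iss _ _ _) = False"
| "is_com (Com _ _ _) = True"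

fun rdset :: "('p, 'v) event \<Rightarrow> 'v \<Rightarrow> 'p src option" where
  "rdset (Iss _ _ R) = R"
| "rdset (Com _ _ _) = (\<lambda>_. None)"

fun wset :: "('p, 'v) event \<Rightarrow> 'v set" where
  "wset (Iss _ _ _) = {}"
| "wset (Com _ _ W) = W"

record ('p, 'v, 'r, 'd) cfg =
  mem   :: "'v \<Rightarrow> 'd"
  lastw :: "'v \<Rightarrow> 'p src"
  pc    :: "'p \<Rightarrow> nat"
  regs  :: "'p \<Rightarrow> 'r \<Rightarrow> 'd"
  pend  :: "'p \<Rightarrow> ('v \<rightharpoonup> 'd) option"
  dirty :: "'p \<Rightarrow> 'v set"

text \<open>Local execution of a transaction on a snapshot (memory m, writers w),
registers, local write buffer L and read-source map R. None = blocked by assume.\<close>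

fun exec_txn :: "('v \<Rightarrow> 'd) \<Rightarrow> ('v \<Rightarrow> 'p src) \<Rightarrow> ('v, 'r, 'd) instr list
    \<Rightarrow> ('r \<Rightarrow> 'd) \<Rightarrow> ('v \<rightharpoonup> 'd) \<Rightarrow> ('v \<Rightarrow> 'p src option)
    \<Rightarrow> (('r \<Rightarrow> 'd) \<times> ('v \<rightharpoonup> 'd) \<times> ('v \<Rightarrow> 'p src option)) option" where
  "exec_txn m w [] \<rho> L R = Some (\<rho>, L, R)"
| "exec_txn m w (Read r x # is) \<rho> L R =
     (case L x of
        Some d \<Rightarrow> exec_txn m w is (\<rho>(r := d)) L R
      | None \<Rightarrow> exec_txn m w is (\<rho>(r := m x)) L (R(x := Some (w x))))"
| "exec_txn m w (Write x e # is) \<rho> L R = exec_txn m w is \<rho> (L(x \<mapsto> e \<rho>)) R"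
| "exec_txn m w (Assume c # is) \<rho> L R = (if c \<rho> then exec_txn m w is \<rho> L R else None)"

text \<open>Issue: begin (take snapshot), execute reads and local writes.
Commit: allowed only if no transaction committed after the issue wrote a variable
that this transaction writes; then publish the writes.\<close>

fun step :: "('p, 'v, 'r, 'd) prog \<Rightarrow> ('p, 'v, 'r, 'd) cfg \<Rightarrow> ('p, 'v) event
    \<Rightarrow> ('p, 'v, 'r, 'd) cfg option" where
  "step P c (Iss p i R) =
     (if pend c p = None \<and> pc c p = i \<and> i < length (code P p) then
        (case exec_txn (mem c) (lastw c) (code P p ! i) (regs c p) Map.empty (\<lambda>_. None) of
           None \<Rightarrow> None
         | Some (\<rho>, L, R') \<Rightarrow>
             (if R' = R then
                Some (c\<lparr>pc := (pc c)(p := Suc i), regs := (regs c)(p := \<rho>),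
                        pend := (pend c)(p := Some L), dirty := (dirty c)(p := {})\<rparr>)
              else None))
      else None)"
| "step P c (Com p i W) =
     (case pend c p of
        None \<Rightarrow> None
      | Some L \<Rightarrow>
          (if pc c p = Suc i \<and> W = dom L \<and> W \<inter> dirty c p = {} then
             Some (c\<lparr>mem := (\<lambda>x. case L x of Some d \<Rightarrow> d | None \<Rightarrow> mem c x),
                     lastw := (\<lambda>x. if x \<in> W then Some (p, i) else lastw c x),
                     pend := (pend c)(p := None),
                     dirty := (\<lambda>q. dirty c q \<union> W)\<rparr>)
           else None))"

fun run :: "('p, 'v, 'r, 'd) prog \<Rightarrow> ('p, 'v, 'r, 'd) cfg \<Rightarrow> ('p, 'v) event list
    \<Rightarrow> ('p, 'v, 'r, 'd) cfg option" where
  "run P c [] = Some c"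
| "run P c (e # es) = (case step P c e of None \<Rightarrow> None | Some c' \<Rightarrow> run P c' es)"

definition init_cfg :: "('p, 'v, 'r, 'd) prog \<Rightarrow> ('p, 'v, 'r, 'd) cfg" where
  "init_cfg P = \<lparr>mem = init_mem P, lastw = (\<lambda>_. None), pc = (\<lambda>_. 0),
                 regs = init_reg P, pend = (\<lambda>_. None), dirty = (\<lambda>_. {})\<rparr>"

definition si_trace :: "('p, 'v, 'r, 'd) prog \<Rightarrow> ('p, 'v) event list \<Rightarrow> bool" where
  "si_trace P \<tau> \<longleftrightarrow> run P (init_cfg P) \<tau> \<noteq> None"

definition ser_trace :: "('p, 'v, 'r, 'd) prog \<Rightarrow> ('p, 'v) event list \<Rightarrow> bool" where
  "ser_trace P \<tau> \<longleftrightarrow> si_trace P \<tau> \<and>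
     (\<forall>k < length \<tau>. is_iss (\<tau> ! k) \<longrightarrow>
        Suc k < length \<tau> \<and> is_com (\<tau> ! Suc k) \<and> tid (\<tau> ! Suc k) = tid (\<tau> ! k))"

definition before :: "('p, 'v) event list \<Rightarrow> ('p, 'v) event \<Rightarrow> ('p, 'v) event \<Rightarrow> bool" where
  "before \<tau> a b \<longleftrightarrow> (\<exists>i j. i < j \<and> j < length \<tau> \<and> \<tau> ! i = a \<and> \<tau> ! j = b)"

definition po :: "('p, 'v) event list \<Rightarrow> ('p, 'v) event \<Rightarrow> ('p, 'v) event \<Rightarrow> bool" where
  "po \<tau> a b \<longleftrightarrow> a \<in> set \<tau> \<and> b \<in> set \<tau> \<and> fst (tid a) = fst (tid b) \<and> snd (tid a) < snd (tid b)"

definition itc :: "('p, 'v) event list \<Rightarrow> ('p, 'v) event \<Rightarrow> ('p, 'v) event \<Rightarrow> bool" where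
  "itc \<tau> a b \<longleftrightarrow> a \<in> set \<tau> \<and> b \<in> set \<tau> \<and> is_iss a \<and> is_com b \<and> tid a = tid b"

definition rf :: "('p, 'v) event list \<Rightarrow> ('p, 'v) event \<Rightarrow> ('p, 'v) event \<Rightarrow> bool" where
  "rf \<tau> a b \<longleftrightarrow> a \<in> set \<tau> \<and> b \<in> set \<tau> \<and> is_com a \<and> is_iss b \<and>
     (\<exists>x. rdset b x = Some (Some (tid a)))"

definition stx :: "('p, 'v) event list \<Rightarrow> 'v \<Rightarrow> ('p, 'v) event \<Rightarrow> ('p, 'v) event \<Rightarrow> bool" where
  "stx \<tau> x a b \<longleftrightarrow> is_com a \<and> is_com b \<and> x \<in> wset a \<and> x \<in> wset b \<and> before \<tau> a b"

definition st :: "('p, 'v) event list \<Rightarrow> ('p, 'v) event \<Rightarrow> ('p, 'v) event \<Rightarrow> bool" where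
  "st \<tau> a b \<longleftrightarrow> (\<exists>x. stx \<tau> x a b)"

definition cf :: "('p, 'v) event list \<Rightarrow> ('p, 'v) event \<Rightarrow> ('p, 'v) event \<Rightarrow> bool" where
  "cf \<tau> a b \<longleftrightarrow> a \<in> set \<tau> \<and> b \<in> set \<tau> \<and> is_iss a \<and> is_com b \<and> tid a \<noteq> tid b \<and>
     (\<exists>x s. rdset a x = Some s \<and> x \<in> wset b \<and>
        (s = None \<or> (\<exists>c. tid c = the s \<and> stx \<tau> x c b)))"

definition hb1 :: "('p, 'v) event list \<Rightarrow> ('p, 'v) event \<Rightarrow> ('p, 'v) event \<Rightarrow> bool" where
  "hb1 \<tau> a b \<longleftrightarrow> po \<tau> a b \<or> rf \<tau> a b \<or> st \<tau> a b \<or> cf \<tau> a b \<or> itc \<tau> a b"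

text \<open>Dependency graph of a trace, restricted to committed transactions
(transactions issued but still pending at the end are discarded).\<close>

definition committed :: "('p, 'v) event list \<Rightarrow> 'p tid set" where
  "committed \<tau> = {tid e | e. e \<in> set \<tau> \<and> is_com e}"

definition cevs :: "('p, 'v) event list \<Rightarrow> ('p, 'v) event set" where
  "cevs \<tau> = {e \<in> set \<tau>. tid e \<in> committed \<tau>}"

definition restr :: "('p, 'v) event list
    \<Rightarrow> (('p, 'v) event list \<Rightarrow> ('p, 'v) event \<Rightarrow> ('p, 'v) event \<Rightarrow> bool)
    \<Rightarrow> (('p, 'v) event \<times> ('p, 'v) event) set" where
  "restr \<tau> r = {(a, b). a \<in> cevs \<tau> \<and> b \<in> cevs \<tau> \<and> r \<tau> a b}"

definition dep_graph :: "('p, 'v) event list \<Rightarrow> ('p, 'v) event set \<times>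
    (('p, 'v) event \<times> ('p, 'v) event) set \<times> (('p, 'v) event \<times> ('p, 'v) event) set \<times>
    (('p, 'v) event \<times> ('p, 'v) event) set \<times> (('p, 'v) event \<times> ('p, 'v) event) set" where
  "dep_graph \<tau> = (cevs \<tau>, restr \<tau> po, restr \<tau> rf, restr \<tau> st, restr \<tau> cf)"

definition anomaly :: "('p, 'v, 'r, 'd) prog \<Rightarrow> ('p, 'v) event list \<Rightarrow> bool" where
  "anomaly P \<tau> \<longleftrightarrow> si_trace P \<tau> \<and> \<not> (\<exists>\<sigma>. ser_trace P \<sigma> \<and> dep_graph \<sigma> = dep_graph \<tau>)"

definition hb_through :: "('p, 'v) event list \<Rightarrow> ('p, 'v) event \<Rightarrow> ('p, 'v) event list
    \<Rightarrow> ('p, 'v) event \<Rightarrow> bool" where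
  "hb_through \<tau> a \<beta> b \<longleftrightarrow> (\<exists>cs. cs \<noteq> [] \<and> subseq cs \<beta> \<and>
     hb1 \<tau> a (hd cs) \<and> hb1 \<tau> (last cs) b \<and>
     (\<forall>k. Suc k < length cs \<longrightarrow> hb1 \<tau> (cs ! k) (cs ! Suc k)))"

definition delayed :: "('p, 'v) event list \<Rightarrow> 'p tid \<Rightarrow> bool" where
  "delayed \<tau> t \<longleftrightarrow> (\<exists>\<alpha> \<beta> \<gamma> R W.
     \<tau> = \<alpha> @ [Iss (fst t) (snd t) R] @ \<beta> @ [Com (fst t) (snd t) W] @ \<gamma> \<and>
     hb_through \<tau> (Iss (fst t) (snd t) R) \<beta> (Com (fst t) (snd t) W))"

definition num_delayed :: "('p, 'v) event list \<Rightarrow> nat" where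
  "num_delayed \<tau> = card {t. delayed \<tau> t}"

definition minimal_anomaly :: "('p, 'v, 'r, 'd) prog \<Rightarrow> ('p, 'v) event list \<Rightarrow> bool" where
  "minimal_anomaly P \<tau> \<longleftrightarrow> anomaly P \<tau> \<and>
     (\<forall>\<tau>'. anomaly P \<tau>' \<longrightarrow> num_delayed \<tau> \<le> num_delayed \<tau>')"

end

theory Submission
  imports Defs
begin

text \<open>Only the commit check of snapshot isolation is needed: while a transaction of
process p is pending, every commit of another process adds its write set to the
dirty set of p, and the commit of the pending transaction requires its write set
to be disjoint from that dirty set. An event of p itself cannot occur in between:
p cannot issue while pending, and once it commits it could only become pending
again by issuing a transaction with a larger index.\<close>

lemma run_append:
  "run P c (xs @ ys) = (case run P c xs of None \<Rightarrow> None | Some c' \<Rightarrow> run P c' ys)"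
  by (induction xs arbitrary: c) (auto split: option.splits)

lemma step_pc_mono:
  assumes "step P c e = Some c'"
  shows "pc c p \<le> pc c' p"
    and "pend c p = None \<Longrightarrow> pend c' p \<noteq> None \<Longrightarrow> pc c p < pc c' p"
    and "pend c p \<noteq> None \<Longrightarrow> pend c' p = None \<Longrightarrow> pc c' p = pc c p"
  using assms by (cases e; auto split: option.splits if_splits)+

lemma run_pc_mono:
  "run P c es = Some c' \<Longrightarrow> pc c p \<le> pc c' p"
proof (induction es arbitrary: c)
  case (Cons e es)
  then obtain c1 where "step P c e = Some c1" "run P c1 es = Some c'"
    by (auto split: option.splits)
  with Cons.IH step_pc_mono(1) show ?case by (meson order_trans)
qed simp

lemma run_pc_less_if_issued:
  "run P c es = Some c' \<Longrightarrow> pend c p = None \<Longrightarrow> pend c' p \<noteq> None \<Longrightarrow> pc c p < pc c' p"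
proof (induction es arbitrary: c)
  case (Cons e es)
  then obtain c1 where c1: "step P c e = Some c1" and run: "run P c1 es = Some c'"
    by (auto split: option.splits)
  show ?case
  proof (cases "pend c1 p")
    case None
    with Cons.IH[OF run] Cons.prems step_pc_mono(1)[OF c1, of p] show ?thesis by simp
  next
    case Some
    with step_pc_mono(2)[OF c1, of p] Cons.prems run_pc_mono[OF run, of p] show ?thesis
      by (simp add: less_le_trans)
  qed
qed simp

lemma run_dirty_while_pending:
  assumes "run P c es = Some c'"
    and "pend c p \<noteq> None" and "pend c' p \<noteq> None" and "pc c' p = pc c p"
  shows "dirty c p \<union> (\<Union>e \<in> set es. wset e) \<subseteq> dirty c' p"
  using assms
proof (induction es arbitrary: c)
  case Nil
  then show ?case by simp
next
  case (Cons e es)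
  then obtain c1 where c1: "step P c e = Some c1" and run: "run P c1 es = Some c'"
    by (auto split: option.splits)
  have still_pending: "pend c1 p \<noteq> None"
  proof
    assume "pend c1 p = None"
    with step_pc_mono(3)[OF c1, of p] run_pc_less_if_issued[OF run, of p] Cons.prems
    show False by simp
  qed
  have "pc c1 p = pc c p" "dirty c p \<union> wset e \<subseteq> dirty c1 p"
    using c1 Cons.prems(2) still_pending
    by (cases e; auto split: option.splits if_splits)+
  with Cons.IH[OF run still_pending] Cons.prems show ?case by auto
qed

theorem lemma3:
  fixes P :: "('p, 'v, 'r, 'd) prog"
    and \<alpha> \<beta> :: "('p, 'v) event list"
  assumes "wf_prog P"
    and "minimal_anomaly P \<tau>"
    and "\<tau> = \<alpha> @ [Iss p t R] @ \<beta> @ [Com p t W]"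
    and "hb_through \<tau> (Iss p t R) \<beta> (Com p t W)"
  shows "\<forall>a \<in> set \<beta>. wset a \<inter> W = {}"
proof -
  have "run P (init_cfg P) \<tau> \<noteq> None"
    using assms(2) unfolding minimal_anomaly_def anomaly_def si_trace_def by blast
  then obtain c c0 c' c'' where
      issue: "step P c (Iss p t R) = Some c0" and
      run: "run P c0 \<beta> = Some c'" and
      commit: "step P c' (Com p t W) = Some c''"
    unfolding assms(3) run_append
    by (auto simp del: step.simps split: option.splits)
  have "pend c0 p \<noteq> None" "pc c0 p = Suc t"
    using issue by (auto split: option.splits if_splits)
  moreover have "pend c' p \<noteq> None" "pc c' p = Suc t" "W \<inter> dirty c' p = {}"
    using commit by (auto split: option.splits if_splits)
  ultimately have "(\<Union>a \<in> set \<beta>. wset a) \<subseteq> dirty c' p"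
    using run_dirty_while_pending[OF run] by simp
  with \<open>W \<inter> dirty c' p = {}\<close> show ?thesis by blast
qed

end
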